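(* Let $1<p<\infty$ and let $f=h+\overline{g}$ be a sense-preserving locally univalent harmonic mapping in $\mathbb{D}$ whose dilatation $w$ is of one of the following forms: (a) $w(z)=z^n$ for some integer $n\ge1$; or (b) $w(z)=\frac{z+a}{1+\overline{a}z}$ for some $a\in\mathbb{D}$. If $f\in\mathcal{BT}_p$, then $f\in\mathcal{BT}_0$, i.e. $\lim_{|z|\to1^-}(1-|z|^2)J_f(z)^{1/2}=0$.
   Context: $\mathbb{D}$ is the unit disk and $dA$ is Lebesgue area measure. A sense-preserving locally univalent harmonic mapping $f:\mathbb{D}\to\mathbb{C}$ is written $f=h+\overline{g}$ with $h,g$ analytic in $\mathbb{D}$, $h'\neq 0$ in $\mathbb{D}$; its dilatation is $w=g'/h'$, analytic with $|w|<1$ in $\mathbb{D}$, and its Jacobian is $J_f=|h'|^2-|g'|^2=|h'|^2(1-|w|^2)$. For a smooth $F:\mathbb{D}\to\mathbb{C}$, $J_F=|F_z|^2-|F_{\bar z}|^2$. For $1<p<\infty$, the Besov-type class $\mathcal{BT}_p$ consists of smooth $F:\mathbb{D}\to\mathbb{C}$ with $\int_{\mathbb{D}}|J_F(z)|^{p/2}(1-|z|^2)^{p-2}\,dA(z)<\infty$. The class $\mathcal{BT}_0$ consists of smooth $F:\mathbb{D}\to\mathbb{C}$ with $\lim_{|z|\to1^-}(1-|z|^2)|J_F(z)|^{1/2}=0$. *)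

theory Defs
  imports "HOL-Complex_Analysis.Complex_Analysis"
begin

definition wirt_z :: "(complex \<Rightarrow> complex) \<Rightarrow> complex \<Rightarrow> complex" where
  "wirt_z F z = (frechet_derivative F (at z) 1 - \<i> * frechet_derivative F (at z) \<i>) / 2"

definition wirt_zbar :: "(complex \<Rightarrow> complex) \<Rightarrow> complex \<Rightarrow> complex" where
  "wirt_zbar F z = (frechet_derivative F (at z) 1 + \<i> * frechet_derivative F (at z) \<i>) / 2"

definition jac :: "(complex \<Rightarrow> complex) \<Rightarrow> complex \<Rightarrow> real" where
  "jac F z = (cmod (wirt_z F z))^2 - (cmod (wirt_zbar F z))^2"

definition BT :: "real \<Rightarrow> (complex \<Rightarrow> complex) set" where
  "BT p = {F. (\<lambda>z. \<bar>jac F z\<bar> powr (p/2) * (1 - (cmod z)^2) powr (p - 2))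
                 integrable_on ball 0 1}"

definition BT0 :: "(complex \<Rightarrow> complex) set" where
  "BT0 = {F. \<forall>\<epsilon>>0. \<exists>r<1. \<forall>z. r < cmod z \<and> cmod z < 1 \<longrightarrow>
                 (1 - (cmod z)^2) * sqrt \<bar>jac F z\<bar> < \<epsilon>}"

end

theory Submission
  imports Defs
begin

text \<open>Since \<open>J\<^sub>f = |h'|\<^sup>2 (1 - |w|\<^sup>2)\<close> and, for both kinds of dilatation, \<open>1 - |w(z)|\<^sup>2\<close> is
  comparable to \<open>1 - |z|\<^sup>2\<close>, the Jacobian is comparable to \<open>(1 - |z|\<^sup>2) |h'(z)|\<^sup>2\<close>. Hence the
  \<open>BT\<^sub>p\<close> integrand dominates a multiple of \<open>|h'|\<^sup>p (1 - |z|\<^sup>2)\<^bsup>3p/2 - 2\<^esup>\<close>, while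
  \<open>((1 - |z|\<^sup>2) J\<^sub>f(z)\<^bsup>1/2\<^esup>)\<^sup>p\<close> is at most a multiple of \<open>(1 - |z|\<^sup>2)\<^bsup>3p/2\<^esup> |h'(z)|\<^sup>p\<close>.
  As \<open>h'\<close> has no zeros, \<open>|h'|\<^sup>p\<close> is the modulus of a holomorphic function and satisfies an area
  sub-mean value inequality. Applied on the square about \<open>z\<close> of half-side \<open>(1 - |z|)/4\<close>, on which
  \<open>1 - |\<zeta>|\<^sup>2\<close> is comparable to \<open>1 - |z|\<close>, it bounds \<open>((1 - |z|\<^sup>2) J\<^sub>f(z)\<^bsup>1/2\<^esup>)\<^sup>p\<close> by a
  constant times the integral of the \<open>BT\<^sub>p\<close> integrand over that square. These squares approach
  the unit circle as \<open>|z| \<rightarrow> 1\<close>, so the integrals tend to \<open>0\<close>.\<close>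

section \<open>Sub-mean value inequality on squares\<close>

definition square :: "complex \<Rightarrow> real \<Rightarrow> complex set" where
  "square z R = cbox (z - Complex R R) (z + Complex R R)"

lemma square_eq_cbox: "square z R = cbox (Complex (Re z - R) (Im z - R)) (Complex (Re z + R) (Im z + R))"
  by (simp add: square_def complex_eq_iff minus_complex.code plus_complex.code)

lemma mem_square: "w \<in> square z R \<longleftrightarrow> Re z - R \<le> Re w \<and> Re w \<le> Re z + R \<and> Im z - R \<le> Im w \<and> Im w \<le> Im z + R"
  by (auto simp: square_def in_cbox_complex_iff)

lemma center_mem_square: "0 \<le> R \<Longrightarrow> z \<in> square z R"
  by (simp add: mem_square)

lemma has_contour_integral_linepath_same_Im_iff:
  assumes "Im z = c" "Im z' = c" "Re z = a" "Re z' = b" "a < b"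
  shows   "(f has_contour_integral I) (linepath z z') \<longleftrightarrow>
             ((\<lambda>x. f (Complex x c)) has_integral I) {a..b}"
proof -
  have "(f has_contour_integral I) (linepath z z') \<longleftrightarrow>
          ((\<lambda>x. f (linepath z z' x) * (z' - z)) has_integral I) {0..1}"
    by (subst has_contour_integral_linepath) simp_all
  also have "\<dots> \<longleftrightarrow> ((\<lambda>x. f (Complex (a + (b - a) * x) c) * of_real (b - a)) has_integral I) {0..1}"
    using assms
    by (intro has_integral_cong arg_cong2[of _ _ _ _ "(*)"] arg_cong[of _ _ f])
       (auto simp: linepath_def complex_eq_iff algebra_simps)
  also have "{0..1} = (\<lambda>x. x / (b - a)) ` {0..b-a}"
    using assms by simp
  also have "((\<lambda>x. f (Complex (a + (b - a) * x) c) * of_real (b - a)) has_integral I) \<dots> \<longleftrightarrow>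
             ((\<lambda>x. f (Complex (a + x) c) * of_real (b-a)) has_integral ((b-a) *\<^sub>R I)) {0..b-a}"
    by (subst has_integral_stretch_real_iff) (use assms in simp_all)
  also have "\<dots> \<longleftrightarrow> ((\<lambda>x. of_real (b-a) * (f (Complex x c))) has_integral (b-a) *\<^sub>R I) {a..b}"
    by (subst has_integral_shift_real_ivl_iff[where c = "-a"])
       (simp_all add: mult_ac)
  also have "\<dots> \<longleftrightarrow> ((\<lambda>x. f (Complex x c)) has_integral I) {a..b}"
    by (subst has_integral_mult_right_iff) (use assms in \<open>auto simp: scaleR_conv_of_real\<close>)
  finally show ?thesis .
qed

lemma norm_contour_integral_horizontal_le:
  assumes I: "(f has_contour_integral I) (linepath (Complex a c) (Complex b c))" and ab: "a < b"
    and cont: "continuous_on (closed_segment (Complex a c) (Complex b c)) f"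
  shows "cmod I \<le> integral {a..b} (\<lambda>u. cmod (f (Complex u c)))"
proof -
  have F: "((\<lambda>u. f (Complex u c)) has_integral I) {a..b}"
    using I ab by (subst (asm) has_contour_integral_linepath_same_Im_iff) auto
  have "continuous_on {a..b} (\<lambda>u. cmod (f (Complex u c)))"
    by (intro continuous_on_norm continuous_on_compose2[OF cont] continuous_intros)
       (use ab in \<open>auto simp: closed_segment_same_Im closed_segment_eq_real_ivl\<close>)
  then show ?thesis
    using integral_norm_bound_integral[OF has_integral_integrable[OF F] integrable_continuous_real]
      integral_unique[OF F] by simp
qed

lemma norm_contour_integral_vertical_le:
  assumes I: "(f has_contour_integral I) (linepath (Complex c a) (Complex c b))" and ab: "a < b"
    and cont: "continuous_on (closed_segment (Complex c a) (Complex c b)) f"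
  shows "cmod I \<le> integral {a..b} (\<lambda>v. cmod (f (Complex c v)))"
proof -
  have F: "((\<lambda>v. f (Complex c v)) has_integral (-\<i> * I)) {a..b}"
    using I ab by (subst (asm) has_contour_integral_linepath_same_Re_iff) auto
  have "continuous_on {a..b} (\<lambda>v. cmod (f (Complex c v)))"
    by (intro continuous_on_norm continuous_on_compose2[OF cont] continuous_intros)
       (use ab in \<open>auto simp: closed_segment_same_Re closed_segment_eq_real_ivl\<close>)
  then have "cmod (-\<i> * I) \<le> integral {a..b} (\<lambda>v. cmod (f (Complex c v)))"
    using integral_norm_bound_integral[OF has_integral_integrable[OF F] integrable_continuous_real]
      integral_unique[OF F] by simp
  then show ?thesis
    by (simp add: norm_mult)
qed

lemma norm_contour_integral_rectpath_le:
  assumes I: "(f has_contour_integral I) (rectpath (Complex a c) (Complex b d))" and "a < b" "c < d"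
    and cont: "continuous_on (path_image (rectpath (Complex a c) (Complex b d))) f"
  shows "cmod I \<le> integral {a..b} (\<lambda>u. cmod (f (Complex u c))) + integral {c..d} (\<lambda>v. cmod (f (Complex b v)))
      + integral {a..b} (\<lambda>u. cmod (f (Complex u d))) + integral {c..d} (\<lambda>v. cmod (f (Complex a v)))"
proof -
  define w1 w2 w3 w4 where "w1 = Complex a c" and "w2 = Complex b c" and "w3 = Complex b d" and "w4 = Complex a d"
  have rp: "rectpath w1 w3 = linepath w1 w2 +++ linepath w2 w3 +++ linepath w3 w4 +++ linepath w4 w1"
    by (simp add: rectpath_def Let_def w1_def w2_def w3_def w4_def)
  have "path_image (rectpath w1 w3) = closed_segment w1 w2 \<union> closed_segment w2 w3 \<union> closed_segment w3 w4 \<union> closed_segment w4 w1"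
    unfolding rp by (simp add: path_image_join Un_assoc)
  then have cont_sides: "continuous_on (closed_segment w1 w2) f" "continuous_on (closed_segment w2 w3) f"
      "continuous_on (closed_segment w3 w4) f" "continuous_on (closed_segment w4 w1) f"
    using cont unfolding w1_def w3_def by (auto elim: continuous_on_subset)
  obtain I1 I2 I3 I4 where
    I1: "(f has_contour_integral I1) (linepath w1 w2)" and I2: "(f has_contour_integral I2) (linepath w2 w3)" and
    I3: "(f has_contour_integral I3) (linepath w3 w4)" and I4: "(f has_contour_integral I4) (linepath w4 w1)"
    using cont_sides[THEN contour_integrable_continuous_linepath] by (meson contour_integrable_on_def)
  have "(f has_contour_integral (I1 + (I2 + (I3 + I4)))) (rectpath w1 w3)"
    unfolding rp by (intro has_contour_integral_join I1 I2 I3 I4 valid_path_join) auto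
  then have "I = I1 + (I2 + (I3 + I4))"
    using I has_contour_integral_unique unfolding w1_def w3_def by blast
  then have "cmod I \<le> cmod I1 + cmod I2 + cmod (- I3) + cmod (- I4)"
    using norm_triangle_ineq[of I1 "I2 + (I3 + I4)"] norm_triangle_ineq[of I2 "I3 + I4"]
      norm_triangle_ineq[of I3 I4] by simp
  also have "\<dots> \<le> integral {a..b} (\<lambda>u. cmod (f (Complex u c))) + integral {c..d} (\<lambda>v. cmod (f (Complex b v)))
      + integral {a..b} (\<lambda>u. cmod (f (Complex u d))) + integral {c..d} (\<lambda>v. cmod (f (Complex a v)))"
    using cont_sides assms(2,3) closed_segment_commute[of w3 w4] closed_segment_commute[of w4 w1]
      norm_contour_integral_horizontal_le[OF I1[unfolded w1_def w2_def]]
      norm_contour_integral_vertical_le[OF I2[unfolded w2_def w3_def]]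
      norm_contour_integral_horizontal_le[OF has_contour_integral_reverse_linepath[OF I3, unfolded w3_def w4_def]]
      norm_contour_integral_vertical_le[OF has_contour_integral_reverse_linepath[OF I4, unfolded w1_def w4_def]]
    unfolding w1_def w2_def w3_def w4_def by (intro add_mono) auto
  finally show ?thesis .
qed

lemma integral_le_integral_superinterval:
  fixes \<phi> \<psi> :: "real \<Rightarrow> real"
  assumes \<phi>: "\<phi> integrable_on {a..b}" and \<psi>: "continuous_on {a'..b'} \<psi>" and sub: "a' \<le> a" "b \<le> b'"
    and le: "\<And>u. u \<in> {a..b} \<Longrightarrow> \<phi> u \<le> \<psi> u" and nonneg: "\<And>u. u \<in> {a'..b'} \<Longrightarrow> 0 \<le> \<psi> u"
  shows "integral {a..b} \<phi> \<le> integral {a'..b'} \<psi>"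
proof -
  have int: "\<psi> integrable_on {a'..b'}"
    using \<psi> integrable_continuous_real by blast
  then have "integral {a..b} \<phi> \<le> integral {a..b} \<psi>"
    using \<phi> sub le integrable_on_subinterval by (intro integral_le) fastforce+
  also have "\<dots> \<le> integral {a'..b'} \<psi>"
    using sub nonneg int integrable_on_subinterval[OF int] by (intro integral_subset_le) auto
  finally show ?thesis .
qed

lemma Cauchy_integral_formula_square:
  fixes G :: "complex \<Rightarrow> complex"
  assumes hol: "G holomorphic_on square z R" and s: "0 < s" "s \<le> R"
  shows "((\<lambda>w. G w / (w - z)) has_contour_integral (2 * pi * \<i> * G z))
           (rectpath (Complex (Re z - s) (Im z - s)) (Complex (Re z + s) (Im z + s)))"
proof -
  define w1 w3 where "w1 = Complex (Re z - s) (Im z - s)" and "w3 = Complex (Re z + s) (Im z + s)"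
  have zbox: "z \<in> box w1 w3"
    using s by (auto simp: in_box_complex_iff w1_def w3_def)
  have boundary: "path_image (rectpath w1 w3) \<subseteq> square z R - {z}"
    using zbox s by (subst path_image_rectpath_cbox_minus_box)
      (auto simp: w1_def w3_def in_cbox_complex_iff mem_square)
  have "((\<lambda>w. G w / (w - z)) has_contour_integral (2*pi * \<i> * winding_number (rectpath w1 w3) z * G z)) (rectpath w1 w3)"
    by (rule Cauchy_integral_formula_convex_simple[OF _ hol _ _ boundary])
       (use s in \<open>auto simp: square_def convex_box interior_cbox in_box_complex_iff\<close>)
  then show ?thesis
    using winding_number_rectpath[OF zbox] unfolding w1_def w3_def by simp
qed

lemma Cauchy_square_estimate:
  fixes G :: "complex \<Rightarrow> complex"
  assumes hol: "G holomorphic_on square z R" and s: "0 < s" "s \<le> R"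
  shows "2 * pi * s * cmod (G z) \<le>
      integral {Im z - R..Im z + R} (\<lambda>v. cmod (G (Complex (Re z + s) v)))
    + integral {Im z - R..Im z + R} (\<lambda>v. cmod (G (Complex (Re z - s) v)))
    + integral {Re z - R..Re z + R} (\<lambda>u. cmod (G (Complex u (Im z + s))))
    + integral {Re z - R..Re z + R} (\<lambda>u. cmod (G (Complex u (Im z - s))))"
proof -
  define x y where "x = Re z" and "y = Im z"
  define Q where "Q = square z R"
  have Qeq: "Q = {w. x - R \<le> Re w \<and> Re w \<le> x + R \<and> y - R \<le> Im w \<and> Im w \<le> y + R}"
    unfolding Q_def x_def y_def by (auto simp: mem_square)
  have contG: "continuous_on Q G"
    using hol unfolding Q_def by (simp add: holomorphic_on_imp_continuous_on)
  define f where "f = (\<lambda>w. G w / (w - z))"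
  have contf: "continuous_on (Q - {z}) f"
    unfolding f_def by (intro continuous_intros continuous_on_subset[OF contG]) auto
  have boundary: "path_image (rectpath (Complex (x - s) (y - s)) (Complex (x + s) (y + s))) \<subseteq> Q - {z}"
    using s by (subst path_image_rectpath_cbox_minus_box)
      (auto simp: Qeq in_cbox_complex_iff in_box_complex_iff x_def y_def)
  have Cauchy: "2 * pi * cmod (G z) \<le>
        integral {x-s..x+s} (\<lambda>u. cmod (f (Complex u (y - s)))) + integral {y-s..y+s} (\<lambda>v. cmod (f (Complex (x + s) v)))
      + integral {x-s..x+s} (\<lambda>u. cmod (f (Complex u (y + s)))) + integral {y-s..y+s} (\<lambda>v. cmod (f (Complex (x - s) v)))"
    using norm_contour_integral_rectpath_le[OF Cauchy_integral_formula_square[OF hol s, folded f_def x_def y_def]]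
      s continuous_on_subset[OF contf boundary] by (simp add: norm_mult)
  have f_le: "cmod (f w) \<le> cmod (G w) / s" if "s \<le> \<bar>Im (w - z)\<bar> \<or> s \<le> \<bar>Re (w - z)\<bar>" for w
  proof -
    have "s \<le> cmod (w - z)"
      using that abs_Im_le_cmod abs_Re_le_cmod order_trans by blast
    then show ?thesis
      unfolding f_def using s by (simp add: norm_divide frac_le)
  qed
  have horizontal: "integral {x-s..x+s} (\<lambda>u. cmod (f (Complex u c))) \<le> integral {x-R..x+R} (\<lambda>u. cmod (G (Complex u c)) / s)"
    if c: "c = y - s \<or> c = y + s" for c
  proof (rule integral_le_integral_superinterval)
    show "(\<lambda>u. cmod (f (Complex u c))) integrable_on {x-s..x+s}"
      by (intro integrable_continuous_real continuous_on_norm continuous_on_compose2[OF contf] continuous_intros)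
         (use c s in \<open>auto simp: Qeq y_def\<close>)
    show "continuous_on {x-R..x+R} (\<lambda>u. cmod (G (Complex u c)) / s)"
      by (intro continuous_intros continuous_on_compose2[OF contG]) (use c s in \<open>auto simp: Qeq\<close>)
  qed (use c s in \<open>auto intro!: f_le simp: y_def\<close>)
  have vertical: "integral {y-s..y+s} (\<lambda>v. cmod (f (Complex c v))) \<le> integral {y-R..y+R} (\<lambda>v. cmod (G (Complex c v)) / s)"
    if c: "c = x - s \<or> c = x + s" for c
  proof (rule integral_le_integral_superinterval)
    show "(\<lambda>v. cmod (f (Complex c v))) integrable_on {y-s..y+s}"
      by (intro integrable_continuous_real continuous_on_norm continuous_on_compose2[OF contf] continuous_intros)
         (use c s in \<open>auto simp: Qeq x_def\<close>)
    show "continuous_on {y-R..y+R} (\<lambda>v. cmod (G (Complex c v)) / s)"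
      by (intro continuous_intros continuous_on_compose2[OF contG]) (use c s in \<open>auto simp: Qeq\<close>)
  qed (use c s in \<open>auto intro!: f_le simp: x_def\<close>)
  have "2 * pi * cmod (G z) \<le>
      (integral {y-R..y+R} (\<lambda>v. cmod (G (Complex (x + s) v)))
     + integral {y-R..y+R} (\<lambda>v. cmod (G (Complex (x - s) v)))
     + integral {x-R..x+R} (\<lambda>u. cmod (G (Complex u (y + s))))
     + integral {x-R..x+R} (\<lambda>u. cmod (G (Complex u (y - s))))) / s"
    using Cauchy horizontal[of "y - s"] horizontal[of "y + s"] vertical[of "x - s"] vertical[of "x + s"]
    by (simp add: add_divide_distrib)
  then show ?thesis
    using s unfolding x_def y_def by (simp add: field_simps)
qed

lemma image_Complex_cbox:
  "(\<lambda>(u, v). Complex u v) ` cbox (a, c) (b, d) = cbox (Complex a c) (Complex b d)"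
proof -
  have "w \<in> (\<lambda>(u, v). Complex u v) ` cbox (a, c) (b, d)" if "w \<in> cbox (Complex a c) (Complex b d)" for w
    using that by (intro image_eqI[of _ _ "(Re w, Im w)"]) (auto simp: cbox_complex_eq cbox_Pair_eq)
  then show ?thesis by (auto simp: cbox_complex_eq cbox_Pair_eq)
qed

lemma image_Re_Im_cbox: "(\<lambda>w. (Re w, Im w)) ` cbox w w' = cbox (Re w, Im w) (Re w', Im w')"
proof -
  have "p \<in> (\<lambda>w. (Re w, Im w)) ` cbox w w'" if "p \<in> cbox (Re w, Im w) (Re w', Im w')" for p
    using that by (intro image_eqI[of _ _ "Complex (fst p) (snd p)"]) (auto simp: cbox_complex_eq cbox_Pair_eq)
  then show ?thesis by (auto simp: cbox_complex_eq cbox_Pair_eq)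
qed

lemma measure_lborel_cbox_Complex: "measure lborel (cbox (Complex a c) (Complex b d)) = measure lborel (cbox (a, c) (b, d))"
proof (cases "a \<le> b \<and> c \<le> d")
  case True
  then have "cbox (Complex a c) (Complex b d) \<noteq> {}"
    by (auto simp: cbox_complex_eq intro!: exI[of _ "Complex a c"])
  with True have "measure lborel (cbox (Complex a c) (Complex b d)) = (b - a) * (d - c)"
    by (simp add: content_cbox_if Basis_complex_def inner_complex_def)
  with True show ?thesis
    by (simp add: content_Pair)
next
  case False
  then have "cbox (Complex a c) (Complex b d) = {}" "cbox (a, c) (b, d) = {}"
    by (auto simp: cbox_complex_eq cbox_Pair_eq)
  then show ?thesis by simp
qed

lemma integral_cbox_Complex_eq_integral_pair:
  fixes F :: "complex \<Rightarrow> 'b::euclidean_space"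
  assumes "F integrable_on cbox (Complex a c) (Complex b d)"
  shows "integral (cbox (Complex a c) (Complex b d)) F = integral (cbox (a, c) (b, d)) (\<lambda>(u, v). F (Complex u v))"
proof -
  have "((\<lambda>x. F ((\<lambda>(u, v). Complex u v) x)) has_integral (1 / 1) *\<^sub>R integral (cbox (Complex a c) (Complex b d)) F)
        ((\<lambda>w. (Re w, Im w)) ` cbox (Complex a c) (Complex b d))"
  proof (rule has_integral_twiddle)
    show "continuous (at x) (\<lambda>(u, v). Complex u v)" for x
      unfolding split_beta' Complex_eq by (intro continuous_intros)
    show "\<exists>w z. (\<lambda>(u, v). Complex u v) ` cbox u v = cbox w z" for u v :: "real \<times> real"
      using image_Complex_cbox[of "fst u" "snd u" "fst v" "snd v"] by auto
    show "\<exists>w z. (\<lambda>w. (Re w, Im w)) ` cbox u v = cbox w z" for u v :: complex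
      using image_Re_Im_cbox by blast
    show "measure lborel ((\<lambda>(u, v). Complex u v) ` cbox u v) = 1 * measure lborel (cbox u v)" for u v :: "real \<times> real"
      using image_Complex_cbox[of "fst u" "snd u" "fst v" "snd v"] measure_lborel_cbox_Complex by simp
  qed (use assms in \<open>auto simp: has_integral_integral\<close>)
  then show ?thesis
    by (simp add: image_Re_Im_cbox split_beta' integral_unique)
qed

lemma integral_cbox_Complex_iterated:
  fixes \<phi> :: "complex \<Rightarrow> real"
  assumes cont: "continuous_on (cbox (Complex a c) (Complex b d)) \<phi>"
  shows "integral (cbox (Complex a c) (Complex b d)) \<phi> = integral {a..b} (\<lambda>u. integral {c..d} (\<lambda>v. \<phi> (Complex u v)))"
    and "integral (cbox (Complex a c) (Complex b d)) \<phi> = integral {c..d} (\<lambda>v. integral {a..b} (\<lambda>u. \<phi> (Complex u v)))"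
proof -
  have cont_pair: "continuous_on (cbox (a, c) (b, d)) (\<lambda>(u, v). \<phi> (Complex u v))"
    unfolding split_beta' by (rule continuous_on_compose2[OF cont])
      (auto intro!: continuous_intros simp: cbox_Pair_eq cbox_complex_eq)
  have eq: "integral (cbox (Complex a c) (Complex b d)) \<phi> = integral (cbox (a, c) (b, d)) (\<lambda>(u, v). \<phi> (Complex u v))"
    using cont by (intro integral_cbox_Complex_eq_integral_pair integrable_continuous)
  then show "integral (cbox (Complex a c) (Complex b d)) \<phi> = integral {a..b} (\<lambda>u. integral {c..d} (\<lambda>v. \<phi> (Complex u v)))"
    using integral_prod_continuous[OF cont_pair] by simp
  have "continuous_on (cbox (c, a) (d, b)) (\<lambda>(v, u). \<phi> (Complex u v))"
    unfolding split_beta' by (rule continuous_on_compose2[OF cont])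
      (auto intro!: continuous_intros simp: cbox_Pair_eq cbox_complex_eq)
  then have "integral (cbox (c, a) (d, b)) (\<lambda>(v, u). \<phi> (Complex u v))
      = integral {c..d} (\<lambda>v. integral {a..b} (\<lambda>u. \<phi> (Complex u v)))"
    using integral_prod_continuous by fastforce
  with eq show "integral (cbox (Complex a c) (Complex b d)) \<phi> = integral {c..d} (\<lambda>v. integral {a..b} (\<lambda>u. \<phi> (Complex u v)))"
    using integral_swap_2dim[of a c b d "\<lambda>u v. \<phi> (Complex u v)"] cont_pair by simp
qed

lemma integral_outer_half_le:
  fixes \<phi> :: "real \<Rightarrow> real"
  assumes cont: "continuous_on {c-R..c+R} \<phi>" and nonneg: "\<And>t. t \<in> {c-R..c+R} \<Longrightarrow> 0 \<le> \<phi> t" and R: "0 < R"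
  shows "(\<lambda>s. \<phi> (c + s)) integrable_on {R/2..R}" "integral {R/2..R} (\<lambda>s. \<phi> (c + s)) \<le> integral {c-R..c+R} \<phi>"
    and "(\<lambda>s. \<phi> (c - s)) integrable_on {R/2..R}" "integral {R/2..R} (\<lambda>s. \<phi> (c - s)) \<le> integral {c-R..c+R} \<phi>"
proof -
  have int: "\<phi> integrable_on {c-R..c+R}"
    using cont integrable_continuous_real by blast
  have "\<phi> integrable_on {c+R/2..c+R}" "\<phi> integrable_on {c-R..c-R/2}"
    using int integrable_on_subinterval R by fastforce+
  then have right: "((\<lambda>s. \<phi> (c + s)) has_integral integral {c+R/2..c+R} \<phi>) {R/2..R}"
       and "((\<lambda>s. \<phi> (c + s)) has_integral integral {c-R..c-R/2} \<phi>) {-R..-(R/2)}"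
    using has_integral_shift_real_ivl_iff[of \<phi> _ "c+R/2" "c+R" c]
      has_integral_shift_real_ivl_iff[of \<phi> _ "c-R" "c-R/2" c]
    by (simp_all add: has_integral_integral add.commute)
  then have left: "((\<lambda>s. \<phi> (c - s)) has_integral integral {c-R..c-R/2} \<phi>) {R/2..R}"
    using has_integral_reflect_real[of "\<lambda>s. \<phi> (c + s)" _ "-(R/2)" "-R"] by simp
  have "integral {c+R/2..c+R} \<phi> \<le> integral {c-R..c+R} \<phi>" "integral {c-R..c-R/2} \<phi> \<le> integral {c-R..c+R} \<phi>"
    using int \<open>\<phi> integrable_on {c+R/2..c+R}\<close> \<open>\<phi> integrable_on {c-R..c-R/2}\<close> nonneg R
    by (auto intro!: integral_subset_le)
  with right left show "(\<lambda>s. \<phi> (c + s)) integrable_on {R/2..R}" "integral {R/2..R} (\<lambda>s. \<phi> (c + s)) \<le> integral {c-R..c+R} \<phi>"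
    and "(\<lambda>s. \<phi> (c - s)) integrable_on {R/2..R}" "integral {R/2..R} (\<lambda>s. \<phi> (c - s)) \<le> integral {c-R..c+R} \<phi>"
    by (simp_all add: integral_unique has_integral_integrable)
qed

lemma average_over_half_sides_le:
  fixes A B :: "real \<Rightarrow> real"
  assumes A: "continuous_on {x-R..x+R} A" "\<And>u. 0 \<le> A u" and B: "continuous_on {y-R..y+R} B" "\<And>v. 0 \<le> B v"
    and R: "0 < R" and le: "\<And>s. s \<in> {R/2..R} \<Longrightarrow> M \<le> A (x+s) + A (x-s) + B (y+s) + B (y-s)"
  shows "R/2 * M \<le> 2 * integral {x-R..x+R} A + 2 * integral {y-R..y+R} B"
proof -
  note A_half = integral_outer_half_le[OF A R] and B_half = integral_outer_half_le[OF B R]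
  have "R/2 * M = integral {R/2..R} (\<lambda>s. M)"
    using R by simp
  also have "\<dots> \<le> integral {R/2..R} (\<lambda>s. A (x+s) + A (x-s) + B (y+s) + B (y-s))"
    using le by (intro integral_le integrable_add A_half(1,3) B_half(1,3)) auto
  also have "\<dots> = integral {R/2..R} (\<lambda>s. A (x+s)) + integral {R/2..R} (\<lambda>s. A (x-s))
      + integral {R/2..R} (\<lambda>s. B (y+s)) + integral {R/2..R} (\<lambda>s. B (y-s))"
    by (simp add: integral_add integrable_add A_half(1,3) B_half(1,3))
  also have "\<dots> \<le> 2 * integral {x-R..x+R} A + 2 * integral {y-R..y+R} B"
    using A_half(2,4) B_half(2,4) by linarith
  finally show ?thesis .
qed

lemma holomorphic_norm_le_square_average:
  fixes G :: "complex \<Rightarrow> complex"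
  assumes hol: "G holomorphic_on square z R" and R: "0 < R"
  shows "cmod (G z) \<le> 8 / (pi * R^2) * integral (square z R) (\<lambda>w. cmod (G w))"
proof -
  define x y where "x = Re z" and "y = Im z"
  define Q where "Q = square z R"
  have Qc: "Q = cbox (Complex (x-R) (y-R)) (Complex (x+R) (y+R))"
    unfolding Q_def x_def y_def by (rule square_eq_cbox)
  have contG: "continuous_on Q (\<lambda>w. cmod (G w))"
    using hol unfolding Q_def by (intro continuous_on_norm holomorphic_on_imp_continuous_on)
  have cont_pair: "continuous_on (cbox (x-R, y-R) (x+R, y+R)) (\<lambda>(u, v). cmod (G (Complex u v)))"
    and cont_pair': "continuous_on (cbox (y-R, x-R) (y+R, x+R)) (\<lambda>(v, u). cmod (G (Complex u v)))"
    unfolding split_beta'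
    by (rule continuous_on_compose2[OF contG]; auto intro!: continuous_intros simp: Qc cbox_Pair_eq cbox_complex_eq)+
  define A where "A = (\<lambda>u. integral {y-R..y+R} (\<lambda>v. cmod (G (Complex u v))))"
  define B where "B = (\<lambda>v. integral {x-R..x+R} (\<lambda>u. cmod (G (Complex u v))))"
  have contA: "continuous_on {x-R..x+R} A"
    unfolding A_def using integral_continuous_on_param[of "{x-R..x+R}" "y-R" "y+R"] cont_pair
    by (simp add: cbox_Pair_eq)
  have contB: "continuous_on {y-R..y+R} B"
    unfolding B_def using integral_continuous_on_param[of "{y-R..y+R}" "x-R" "x+R"] cont_pair'
    by (simp add: cbox_Pair_eq)
  have A_nonneg: "0 \<le> A u" for u
    unfolding A_def by (cases "(\<lambda>v. cmod (G (Complex u v))) integrable_on {y-R..y+R}")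
      (auto intro: integral_nonneg simp: not_integrable_integral)
  have B_nonneg: "0 \<le> B v" for v
    unfolding B_def by (cases "(\<lambda>u. cmod (G (Complex u v))) integrable_on {x-R..x+R}")
      (auto intro: integral_nonneg simp: not_integrable_integral)
  define P where "P = integral Q (\<lambda>w. cmod (G w))"
  have P: "P = integral {x-R..x+R} A" "P = integral {y-R..y+R} B"
    unfolding P_def A_def B_def Qc
    by (fact integral_cbox_Complex_iterated[OF contG[unfolded Qc]])+
  have on_square_boundary: "pi * R * cmod (G z) \<le> A (x+s) + A (x-s) + B (y+s) + B (y-s)" if "s \<in> {R/2..R}" for s
  proof -
    have "pi * R * cmod (G z) \<le> 2 * pi * s * cmod (G z)"
      using that by (intro mult_right_mono) auto
    also have "\<dots> \<le> A (x+s) + A (x-s) + B (y+s) + B (y-s)"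
      using Cauchy_square_estimate[OF hol] that R unfolding A_def B_def x_def y_def by simp
    finally show ?thesis .
  qed
  have "R/2 * (pi * R * cmod (G z)) \<le> 2 * integral {x-R..x+R} A + 2 * integral {y-R..y+R} B"
    by (rule average_over_half_sides_le[OF contA A_nonneg contB B_nonneg R on_square_boundary])
  then have "cmod (G z) * (pi * R^2) \<le> 8 * P"
    using P by (simp add: power2_eq_square algebra_simps)
  then show ?thesis
    using R unfolding P_def Q_def by (simp add: field_simps)
qed

lemma holomorphic_norm_powr_le_square_average:
  fixes H :: "complex \<Rightarrow> complex"
  assumes hol: "H holomorphic_on S" and S: "contractible S" and nonzero: "\<And>w. w \<in> S \<Longrightarrow> H w \<noteq> 0"
    and sub: "square z R \<subseteq> S" and R: "0 < R"
  shows "cmod (H z) powr p \<le> 8 / (pi * R^2) * integral (square z R) (\<lambda>w. cmod (H w) powr p)"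
proof -
  obtain L where L: "L holomorphic_on S" "\<And>w. w \<in> S \<Longrightarrow> H w = exp (L w)"
    using contractible_imp_holomorphic_log[OF hol S nonzero] by metis
  define G where "G = (\<lambda>w. exp (of_real p * L w))"
  have norm_G: "cmod (G w) = cmod (H w) powr p" if "w \<in> S" for w
    using that by (simp add: G_def L(2) norm_exp_eq_Re powr_def)
  have "G holomorphic_on square z R"
    unfolding G_def by (intro holomorphic_intros holomorphic_on_subset[OF L(1) sub])
  moreover have "z \<in> square z R"
    using R by (simp add: center_mem_square)
  moreover have "integral (square z R) (\<lambda>w. cmod (G w))
      = integral (square z R) (\<lambda>w. cmod (H w) powr p)"
    using sub norm_G by (intro integral_cong) auto
  ultimately show ?thesis
    using holomorphic_norm_le_square_average[OF _ R] sub norm_G by (metis subsetD)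
qed

lemma square_near_unit_circle:
  fixes z \<zeta> :: complex
  defines "R \<equiv> (1 - cmod z) / 4"
  assumes z: "cmod z < 1" and \<zeta>: "\<zeta> \<in> square z R"
  shows "cmod z - (1 - cmod z) / 2 \<le> cmod \<zeta>"
    and "(1 - cmod z) / 2 \<le> 1 - (cmod \<zeta>)^2" "1 - (cmod \<zeta>)^2 \<le> 3 * (1 - cmod z)"
    and "cmod \<zeta> < 1"
proof -
  define \<delta> where "\<delta> = 1 - cmod z"
  have "\<bar>Re (\<zeta> - z)\<bar> \<le> R" "\<bar>Im (\<zeta> - z)\<bar> \<le> R"
    using \<zeta> by (auto simp: mem_square)
  then have near: "cmod (\<zeta> - z) \<le> \<delta> / 2"
    using cmod_le[of "\<zeta> - z"] unfolding R_def \<delta>_def by linarith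
  moreover have "cmod z - cmod (\<zeta> - z) \<le> cmod \<zeta>" "cmod \<zeta> \<le> cmod z + cmod (\<zeta> - z)"
    using norm_triangle_ineq2[of z "z - \<zeta>"] norm_triangle_ineq[of z "\<zeta> - z"] norm_minus_commute[of z \<zeta>]
    by auto
  ultimately have bounds: "\<delta> / 2 \<le> 1 - cmod \<zeta>" "1 - cmod \<zeta> \<le> 3 * \<delta> / 2"
    unfolding \<delta>_def by auto
  then show "cmod \<zeta> < 1"
    using z unfolding \<delta>_def by argo
  from bounds show "cmod z - (1 - cmod z) / 2 \<le> cmod \<zeta>"
    using near \<open>cmod z - cmod (\<zeta> - z) \<le> cmod \<zeta>\<close> unfolding \<delta>_def by linarith
  have factor: "1 - (cmod \<zeta>)^2 = (1 - cmod \<zeta>) * (1 + cmod \<zeta>)"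
    by (simp add: power2_eq_square algebra_simps)
  have "1 - cmod \<zeta> \<le> (1 - cmod \<zeta>) * (1 + cmod \<zeta>)"
    using bounds z \<delta>_def mult_left_mono[of 1 "1 + cmod \<zeta>" "1 - cmod \<zeta>"] by simp
  then show "(1 - cmod z) / 2 \<le> 1 - (cmod \<zeta>)^2"
    using bounds factor unfolding \<delta>_def by linarith
  have "(1 - cmod \<zeta>) * (1 + cmod \<zeta>) \<le> (3 * \<delta> / 2) * 2"
    using bounds z \<delta>_def by (intro mult_mono) auto
  then show "1 - (cmod \<zeta>)^2 \<le> 3 * (1 - cmod z)"
    using factor unfolding \<delta>_def by linarith
qed

lemma square_near_unit_circle_subset_ball: "cmod z < 1 \<Longrightarrow> square z ((1 - cmod z) / 4) \<subseteq> ball 0 1"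
  using square_near_unit_circle(4) by auto

lemma one_minus_norm_power_bounds:
  fixes z :: complex
  assumes "n \<ge> 1" "cmod z < 1"
  shows "1 - (cmod z)^2 \<le> 1 - (cmod (z^n))^2" "1 - (cmod (z^n))^2 \<le> real n * (1 - (cmod z)^2)"
proof -
  define t where "t = (cmod z)^2"
  have t: "0 \<le> t" "t < 1"
    using assms(2) unfolding t_def by (auto simp: power_less_one_iff)
  have norm_pow: "(cmod (z^n))^2 = t^n"
    unfolding t_def by (simp add: norm_power power_mult[symmetric] mult.commute)
  have "t^n \<le> t^1"
    using t assms(1) by (intro power_decreasing) auto
  moreover have "1 + real n * (t - 1) \<le> (1 + (t - 1))^n"
    using t by (intro Bernoulli_inequality) auto
  ultimately show "1 - (cmod z)^2 \<le> 1 - (cmod (z^n))^2" "1 - (cmod (z^n))^2 \<le> real n * (1 - (cmod z)^2)"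
    unfolding norm_pow t_def[symmetric] by (simp_all add: algebra_simps)
qed

lemma one_minus_norm_moebius_eq:
  fixes a z :: complex
  assumes "1 + cnj a * z \<noteq> 0"
  shows "1 - (cmod ((z + a) / (1 + cnj a * z)))^2 = (1 - (cmod a)^2) * (1 - (cmod z)^2) / (cmod (1 + cnj a * z))^2"
proof -
  have "(cmod (1 + cnj a * z))^2 - (cmod (z + a))^2 = (1 - (cmod a)^2) * (1 - (cmod z)^2)"
    unfolding cmod_power2 by (simp add: algebra_simps power2_eq_square)
  with assms show ?thesis
    by (simp add: norm_divide power_divide field_simps)
qed

lemma one_minus_norm_moebius_bounds:
  fixes a z :: complex
  assumes a: "cmod a < 1" and z: "cmod z < 1"
  shows "(1 - (cmod a)^2) / 4 * (1 - (cmod z)^2) \<le> 1 - (cmod ((z + a) / (1 + cnj a * z)))^2"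
    and "1 - (cmod ((z + a) / (1 + cnj a * z)))^2 \<le> (1 - (cmod a)^2) / (1 - cmod a)^2 * (1 - (cmod z)^2)"
proof -
  define d where "d = cmod (1 + cnj a * z)"
  define P where "P = (1 - (cmod a)^2) * (1 - (cmod z)^2)"
  have az: "cmod (cnj a * z) \<le> cmod a"
    using z by (simp add: norm_mult mult_left_le)
  have d_lower: "1 - cmod a \<le> d"
    unfolding d_def using norm_diff_ineq[of 1 "cnj a * z"] az by simp
  have d_upper: "d \<le> 2"
    unfolding d_def using norm_triangle_ineq[of 1 "cnj a * z"] az a by simp
  have d_pos: "0 < d"
    using d_lower a by linarith
  have eq: "1 - (cmod ((z + a) / (1 + cnj a * z)))^2 = P / d^2"
    using d_pos unfolding P_def d_def by (intro one_minus_norm_moebius_eq) auto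
  have P: "0 \<le> P"
    unfolding P_def using a z by (intro mult_nonneg_nonneg) (auto simp: abs_square_le_1 power_le_one)
  have "P / 4 \<le> P / d^2"
    using d_upper d_pos P power_mono[of d 2 2] by (intro divide_left_mono) auto
  moreover have "P / d^2 \<le> P / (1 - cmod a)^2"
    using d_lower d_pos P a by (intro divide_left_mono) (auto intro!: power_mono)
  ultimately show "(1 - (cmod a)^2) / 4 * (1 - (cmod z)^2) \<le> 1 - (cmod ((z + a) / (1 + cnj a * z)))^2"
    and "1 - (cmod ((z + a) / (1 + cnj a * z)))^2 \<le> (1 - (cmod a)^2) / (1 - cmod a)^2 * (1 - (cmod z)^2)"
    unfolding eq P_def by simp_all
qed

lemma powr_half_mult_square:
  fixes c q k p :: real
  assumes "0 \<le> c" "0 \<le> q" "0 < k"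
  shows "(c * q * k^2) powr (p/2) = c powr (p/2) * q powr (p/2) * k powr p"
proof -
  have "(k^2) powr (p/2) = (k powr 2) powr (p/2)"
    using assms by simp
  also have "\<dots> = k powr p"
    by (simp add: powr_powr)
  finally have "(k^2) powr (p/2) = k powr p" .
  with assms show ?thesis
    by (simp add: powr_mult)
qed

text \<open>The exponent may be negative (it is \<open>3p/2 - 2\<close> below), hence the minimum.\<close>

lemma powr_comparable_lower_bound:
  fixes e \<delta> q :: real
  assumes "0 < \<delta>" "\<delta>/2 \<le> q" "q \<le> 3*\<delta>"
  shows "min ((1/2) powr e) (3 powr e) * \<delta> powr e \<le> q powr e"
proof -
  define l where "l = q / \<delta>"
  have l: "1/2 \<le> l" "l \<le> 3"
    using assms unfolding l_def by (auto simp: field_simps)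
  have "min ((1/2) powr e) (3 powr e) \<le> l powr e"
  proof (cases "0 \<le> e")
    case True
    then show ?thesis using l powr_mono2[of e "1/2" l] by linarith
  next
    case False
    then show ?thesis using l powr_mono2'[of e l 3] by linarith
  qed
  then have "min ((1/2) powr e) (3 powr e) * \<delta> powr e \<le> l powr e * \<delta> powr e"
    by (intro mult_right_mono) auto
  also have "\<dots> = q powr e"
    using assms powr_mult[of l \<delta> e] l unfolding l_def by simp
  finally show ?thesis .
qed

lemma integrable_on_ball_restrict_outside_circle:
  fixes u :: "complex \<Rightarrow> real"
  assumes int: "u integrable_on ball 0 1" and nonneg: "\<And>\<zeta>. \<zeta> \<in> ball 0 1 \<Longrightarrow> 0 \<le> u \<zeta>"
  shows "(\<lambda>\<zeta>. if \<rho> < cmod \<zeta> then u \<zeta> else 0) integrable_on ball 0 1"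
proof -
  have abs: "u absolutely_integrable_on ball 0 1"
    using int nonneg by (rule nonnegative_absolutely_integrable_1)
  have "open {\<zeta>::complex. \<rho> < cmod \<zeta>}"
    by (intro open_Collect_less continuous_intros)
  then have "{\<zeta>. \<rho> < cmod \<zeta>} \<inter> ball 0 1 \<in> sets lebesgue"
    by (intro fmeasurableD lmeasurable_open open_Int) auto
  then have "u absolutely_integrable_on ({\<zeta>. \<rho> < cmod \<zeta>} \<inter> ball 0 1)"
    by (rule set_integrable_subset[OF abs]) auto
  then have "u integrable_on ({\<zeta>. \<rho> < cmod \<zeta>} \<inter> ball 0 1)"
    using absolutely_integrable_on_def by blast
  then show ?thesis
    using integrable_restrict_Int[of "{\<zeta>. \<rho> < cmod \<zeta>}" u "ball 0 1"] by simp
qed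

lemma integral_near_unit_circle_tendsto_0:
  fixes u :: "complex \<Rightarrow> real"
  assumes int: "u integrable_on ball 0 1" and nonneg: "\<And>\<zeta>. \<zeta> \<in> ball 0 1 \<Longrightarrow> 0 \<le> u \<zeta>"
  defines "T \<equiv> \<lambda>n \<zeta>. if 1 - 1 / (real n + 2) < cmod \<zeta> then u \<zeta> else 0"
  shows "(\<lambda>n. integral (ball 0 1) (T n)) \<longlonglongrightarrow> 0"
proof -
  have T_int: "T n integrable_on ball 0 1" for n
    unfolding T_def by (rule integrable_on_ball_restrict_outside_circle[OF int nonneg])
  have T_le: "norm (T n \<zeta>) \<le> u \<zeta>" if "\<zeta> \<in> ball 0 1" for n \<zeta>
    using nonneg[OF that] unfolding T_def by auto
  have T_tendsto: "(\<lambda>n. T n \<zeta>) \<longlonglongrightarrow> 0" if "\<zeta> \<in> ball 0 1" for \<zeta>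
  proof -
    have gap: "0 < 1 - cmod \<zeta>"
      using that by simp
    obtain N :: nat where N: "1 / (1 - cmod \<zeta>) < real N"
      using reals_Archimedean2 by blast
    have "1 / (real n + 2) < 1 - cmod \<zeta>" if "n \<ge> N" for n
    proof -
      have "1 / (1 - cmod \<zeta>) < real n + 2"
        using N that by linarith
      then show ?thesis
        using gap by (simp add: field_simps)
    qed
    then have "T n \<zeta> = 0" if "n \<ge> N" for n
      using that unfolding T_def by fastforce
    then show ?thesis
      by (intro tendsto_eventually) (auto simp: eventually_sequentially)
  qed
  show ?thesis
    using dominated_convergence(2)[where f = T and g = "\<lambda>_. 0", OF T_int int T_le T_tendsto] by simp
qed

lemma small_integral_near_unit_circle:
  fixes u :: "complex \<Rightarrow> real"
  assumes int: "u integrable_on ball 0 1" and nonneg: "\<And>\<zeta>. \<zeta> \<in> ball 0 1 \<Longrightarrow> 0 \<le> u \<zeta>" and \<epsilon>: "0 < \<epsilon>"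
  obtains r where "r < 1"
    "\<And>a b. cbox a b \<subseteq> ball 0 1 \<inter> {\<zeta>. r < cmod \<zeta>} \<Longrightarrow> u integrable_on cbox a b \<and> integral (cbox a b) u < \<epsilon>"
proof -
  define T where "T = (\<lambda>n \<zeta>. if 1 - 1 / (real n + 2) < cmod \<zeta> then u \<zeta> else (0::real))"
  obtain N where N: "integral (ball 0 1) (T N) < \<epsilon>"
    using order_tendstoD(2)[OF integral_near_unit_circle_tendsto_0[OF int nonneg] \<epsilon>]
    unfolding T_def by (meson eventually_sequentially order_refl)
  define r where "r = 1 - 1 / (real N + 2)"
  have T_nonneg: "0 \<le> T N \<zeta>" if "\<zeta> \<in> ball 0 1" for \<zeta>
    using nonneg[OF that] unfolding T_def by simp
  have abs_u: "u absolutely_integrable_on ball 0 1"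
    using int nonneg by (rule nonnegative_absolutely_integrable_1)
  have T_int: "T N integrable_on ball 0 1"
    unfolding T_def by (rule integrable_on_ball_restrict_outside_circle[OF int nonneg])
  show ?thesis
  proof
    show "r < 1"
      unfolding r_def by simp
    fix a b assume sub: "cbox a b \<subseteq> ball 0 1 \<inter> {\<zeta>. r < cmod \<zeta>}"
    have "T N absolutely_integrable_on ball 0 1"
      using T_int T_nonneg by (rule nonnegative_absolutely_integrable_1)
    then have iT: "T N integrable_on cbox a b"
      using absolutely_integrable_on_subcbox sub absolutely_integrable_on_def by blast
    have iu: "u integrable_on cbox a b"
      using absolutely_integrable_on_subcbox[OF abs_u] sub absolutely_integrable_on_def by blast
    have "integral (cbox a b) u = integral (cbox a b) (T N)"
      using sub by (intro integral_cong) (auto simp: T_def r_def)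
    also have "\<dots> \<le> integral (ball 0 1) (T N)"
      using sub iT T_int T_nonneg by (intro integral_subset_le) (auto simp: T_def)
    finally show "u integrable_on cbox a b \<and> integral (cbox a b) u < \<epsilon>"
      using N iu by linarith
  qed
qed

section \<open>Jacobians comparable to \<open>(1 - |z|\<^sup>2) |H z|\<^sup>2\<close>\<close>

definition BT_integrand :: "real \<Rightarrow> (complex \<Rightarrow> complex) \<Rightarrow> complex \<Rightarrow> real" where
  "BT_integrand p F z = \<bar>jac F z\<bar> powr (p/2) * (1 - (cmod z)^2) powr (p - 2)"

lemma BT_iff_integrable: "F \<in> BT p \<longleftrightarrow> BT_integrand p F integrable_on ball 0 1"
  by (simp add: BT_def BT_integrand_def[abs_def])

lemma BT_integrand_integrable_on_cbox:
  assumes "F \<in> BT p" and "cbox a b \<subseteq> ball 0 1"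
  shows "BT_integrand p F integrable_on cbox a b"
proof -
  have "BT_integrand p F absolutely_integrable_on ball 0 1"
    using assms(1) by (intro nonnegative_absolutely_integrable_1) (auto simp: BT_iff_integrable BT_integrand_def)
  then show ?thesis
    using absolutely_integrable_on_subcbox assms(2) absolutely_integrable_on_def by blast
qed

locale jacobian_comparable =
  fixes F H :: "complex \<Rightarrow> complex" and c C :: real
  assumes c_pos: "0 < c" and C_pos: "0 < C"
    and holomorphic_H: "H holomorphic_on ball 0 1" and H_nonzero: "\<And>z. z \<in> ball 0 1 \<Longrightarrow> H z \<noteq> 0"
    and jac_lower: "\<And>z. z \<in> ball 0 1 \<Longrightarrow> c * (1 - (cmod z)^2) * (cmod (H z))^2 \<le> jac F z"
    and jac_upper: "\<And>z. z \<in> ball 0 1 \<Longrightarrow> jac F z \<le> C * (1 - (cmod z)^2) * (cmod (H z))^2"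
begin

lemma BT_integrand_lower:
  assumes p: "0 < p" and z: "z \<in> ball 0 1"
  shows "c powr (p/2) * cmod (H z) powr p * (1 - (cmod z)^2) powr (3*p/2 - 2) \<le> BT_integrand p F z"
proof -
  define q where "q = 1 - (cmod z)^2"
  have q: "0 < q"
    using z unfolding q_def by (simp add: abs_square_less_1)
  have H: "0 < cmod (H z)"
    using H_nonzero[OF z] by simp
  have "c powr (p/2) * q powr (p/2) * cmod (H z) powr p = (c * q * (cmod (H z))^2) powr (p/2)"
    using c_pos q H by (simp add: powr_half_mult_square)
  also have "\<dots> \<le> \<bar>jac F z\<bar> powr (p/2)"
    using jac_lower[OF z] c_pos q H p by (intro powr_mono2) (auto simp: q_def)
  finally have "c powr (p/2) * q powr (p/2) * cmod (H z) powr p * q powr (p - 2) \<le> \<bar>jac F z\<bar> powr (p/2) * q powr (p - 2)"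
    by (rule mult_right_mono) simp
  then have "c powr (p/2) * cmod (H z) powr p * (q powr (p/2) * q powr (p - 2)) \<le> \<bar>jac F z\<bar> powr (p/2) * q powr (p - 2)"
    by (simp only: mult_ac)
  moreover have "q powr (p/2) * q powr (p - 2) = q powr (3*p/2 - 2)"
    by (simp flip: powr_add)
  ultimately show ?thesis
    unfolding BT_integrand_def q_def by simp
qed

lemma little_BT_quantity_upper:
  assumes p: "0 < p" and z: "z \<in> ball 0 1"
  shows "((1 - (cmod z)^2) * sqrt \<bar>jac F z\<bar>) powr p \<le> C powr (p/2) * (1 - (cmod z)^2) powr (3*p/2) * cmod (H z) powr p"
proof -
  define q where "q = 1 - (cmod z)^2"
  have q: "0 < q"
    using z unfolding q_def by (simp add: abs_square_less_1)
  have H: "0 < cmod (H z)"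
    using H_nonzero[OF z] by simp
  have J: "0 \<le> jac F z"
    using order_trans[OF _ jac_lower[OF z]] c_pos q unfolding q_def by simp
  have "(q * sqrt \<bar>jac F z\<bar>) powr p = q powr p * jac F z powr (p/2)"
    using q J by (simp add: powr_mult powr_half_sqrt[symmetric] powr_powr)
  also have "\<dots> \<le> q powr p * (C * q * (cmod (H z))^2) powr (p/2)"
    using jac_upper[OF z] J p by (intro mult_left_mono powr_mono2) (auto simp: q_def)
  also have "\<dots> = q powr p * (C powr (p/2) * q powr (p/2) * cmod (H z) powr p)"
    using C_pos q H by (simp only: powr_half_mult_square)
  also have "\<dots> = C powr (p/2) * (q powr p * q powr (p/2)) * cmod (H z) powr p"
    by (simp only: mult_ac)
  also have "q powr p * q powr (p/2) = q powr (3*p/2)"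
    by (simp flip: powr_add)
  finally show ?thesis
    unfolding q_def .
qed

lemma integral_square_lower:
  assumes p: "0 < p" and BT: "F \<in> BT p" and z: "cmod z < 1"
  defines "e \<equiv> 3*p/2 - 2" and "Q \<equiv> square z ((1 - cmod z) / 4)"
  shows "c powr (p/2) * min ((1/2) powr e) (3 powr e) * (1 - cmod z) powr e * integral Q (\<lambda>w. cmod (H w) powr p)
    \<le> integral Q (BT_integrand p F)"
proof -
  define k where "k = c powr (p/2) * min ((1/2) powr e) (3 powr e) * (1 - cmod z) powr e"
  have Q_sub: "Q \<subseteq> ball 0 1"
    unfolding Q_def using z by (rule square_near_unit_circle_subset_ball)
  have "k * cmod (H w) powr p \<le> BT_integrand p F w" if w: "w \<in> Q" for w
  proof -
    have "min ((1/2) powr e) (3 powr e) * (1 - cmod z) powr e \<le> (1 - (cmod w)^2) powr e"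
      using powr_comparable_lower_bound square_near_unit_circle(2,3)[OF z] w z unfolding Q_def by simp
    then have "c powr (p/2) * cmod (H w) powr p * (min ((1/2) powr e) (3 powr e) * (1 - cmod z) powr e)
        \<le> c powr (p/2) * cmod (H w) powr p * (1 - (cmod w)^2) powr e"
      by (rule mult_left_mono) simp
    then have "k * cmod (H w) powr p \<le> c powr (p/2) * cmod (H w) powr p * (1 - (cmod w)^2) powr e"
      unfolding k_def by (simp only: mult_ac)
    also have "\<dots> \<le> BT_integrand p F w"
      using BT_integrand_lower[OF p] Q_sub w unfolding e_def by blast
    finally show ?thesis .
  qed
  moreover have "(\<lambda>w. cmod (H w) powr p) integrable_on Q"
    using Q_sub holomorphic_H H_nonzero unfolding Q_def square_def
    by (intro integrable_continuous continuous_intros continuous_on_subset[OF holomorphic_on_imp_continuous_on]) auto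
  ultimately have "integral Q (\<lambda>w. k * cmod (H w) powr p) \<le> integral Q (BT_integrand p F)"
    using BT_integrand_integrable_on_cbox[OF BT Q_sub[unfolded Q_def square_def]] unfolding Q_def square_def
    by (intro integral_le integrable_on_mult_right) auto
  then show ?thesis
    unfolding k_def by simp
qed

lemma little_BT_quantity_le_square_integral:
  assumes p: "0 < p" and BT: "F \<in> BT p"
  obtains K where "0 < K"
    "\<And>z. cmod z < 1 \<Longrightarrow> ((1 - (cmod z)^2) * sqrt \<bar>jac F z\<bar>) powr p
       \<le> K * integral (square z ((1 - cmod z) / 4)) (BT_integrand p F)"
proof
  define e where "e = 3*p/2 - 2"
  define m where "m = min ((1/2) powr e) (3 powr e)"
  define K where "K = C powr (p/2) * 2 powr (3*p/2) * 128 / (pi * c powr (p/2) * m)"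
  have m: "0 < m"
    unfolding m_def by simp
  then show "0 < K"
    unfolding K_def using C_pos c_pos by simp
  fix z :: complex assume z: "cmod z < 1"
  define \<delta> where "\<delta> = 1 - cmod z"
  define Q where "Q = square z (\<delta> / 4)"
  have \<delta>: "0 < \<delta>"
    using z unfolding \<delta>_def by simp
  have mean: "cmod (H z) powr p \<le> 8 / (pi * (\<delta> / 4)^2) * integral Q (\<lambda>w. cmod (H w) powr p)"
    unfolding Q_def using \<delta> square_near_unit_circle_subset_ball[OF z] H_nonzero
    by (intro holomorphic_norm_powr_le_square_average[OF holomorphic_H])
       (auto simp: \<delta>_def intro: convex_imp_contractible)
  have "1 - (cmod z)^2 = \<delta> * (1 + cmod z)"
    unfolding \<delta>_def by (simp add: power2_eq_square algebra_simps)
  also have "\<dots> \<le> 2 * \<delta>"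
    using z \<delta> by simp
  finally have "1 - (cmod z)^2 \<le> 2 * \<delta>" .
  have "((1 - (cmod z)^2) * sqrt \<bar>jac F z\<bar>) powr p \<le> C powr (p/2) * (1 - (cmod z)^2) powr (3*p/2) * cmod (H z) powr p"
    using little_BT_quantity_upper[OF p] z by simp
  also have "\<dots> \<le> C powr (p/2) * (2 * \<delta>) powr (3*p/2) * cmod (H z) powr p"
    using \<open>1 - (cmod z)^2 \<le> 2 * \<delta>\<close> z p
    by (intro mult_right_mono mult_left_mono powr_mono2) (auto simp: power_le_one)
  also have "\<dots> \<le> C powr (p/2) * (2 * \<delta>) powr (3*p/2) * (8 / (pi * (\<delta> / 4)^2) * integral Q (\<lambda>w. cmod (H w) powr p))"
    using mean by (intro mult_left_mono) auto
  also have "\<dots> = K * (c powr (p/2) * m * \<delta> powr e * integral Q (\<lambda>w. cmod (H w) powr p))"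
  proof -
    have "\<delta> powr (3*p/2) = \<delta> powr e * \<delta> powr 2"
      unfolding e_def by (simp flip: powr_add)
    then have "(2 * \<delta>) powr (3*p/2) = 2 powr (3*p/2) * \<delta> powr e * \<delta>^2"
      using \<delta> by (simp add: powr_mult)
    then show ?thesis
      unfolding K_def using m c_pos \<delta> by (simp add: field_simps power2_eq_square)
  qed
  also have "\<dots> \<le> K * integral Q (BT_integrand p F)"
    using integral_square_lower[OF p BT z] \<open>0 < K\<close> unfolding Q_def \<delta>_def m_def e_def
    by (intro mult_left_mono) auto
  finally show "((1 - (cmod z)^2) * sqrt \<bar>jac F z\<bar>) powr p
       \<le> K * integral (square z ((1 - cmod z) / 4)) (BT_integrand p F)"
    unfolding Q_def \<delta>_def .
qed

theorem BT_imp_BT0: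
  assumes p: "0 < p" and BT: "F \<in> BT p"
  shows "F \<in> BT0"
  unfolding BT0_def
proof (intro CollectI allI impI)
  fix \<epsilon> :: real assume \<epsilon>: "0 < \<epsilon>"
  obtain K where K: "0 < K" and local_bound: "\<And>z. cmod z < 1 \<Longrightarrow> ((1 - (cmod z)^2) * sqrt \<bar>jac F z\<bar>) powr p
       \<le> K * integral (square z ((1 - cmod z) / 4)) (BT_integrand p F)"
    using little_BT_quantity_le_square_integral[OF p BT] by blast
  obtain r where r: "r < 1" and small: "\<And>a b. cbox a b \<subseteq> ball 0 1 \<inter> {\<zeta>. r < cmod \<zeta>} \<Longrightarrow>
      BT_integrand p F integrable_on cbox a b \<and> integral (cbox a b) (BT_integrand p F) < \<epsilon> powr p / K"
    using small_integral_near_unit_circle[of "BT_integrand p F" "\<epsilon> powr p / K"] BT K \<epsilon>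
    by (auto simp: BT_iff_integrable BT_integrand_def)
  show "\<exists>r<1. \<forall>z. r < cmod z \<and> cmod z < 1 \<longrightarrow> (1 - (cmod z)^2) * sqrt \<bar>jac F z\<bar> < \<epsilon>"
  proof (intro exI[of _ "(2*r + 1) / 3"] conjI allI impI)
    show "(2*r + 1) / 3 < 1"
      using r by simp
    fix z assume z: "(2*r + 1) / 3 < cmod z \<and> cmod z < 1"
    define Q where "Q = square z ((1 - cmod z) / 4)"
    have "Q \<subseteq> ball 0 1 \<inter> {\<zeta>. r < cmod \<zeta>}"
    proof
      fix \<zeta> assume "\<zeta> \<in> Q"
      then have "cmod z - (1 - cmod z) / 2 \<le> cmod \<zeta>" "cmod \<zeta> < 1"
        using square_near_unit_circle(1,4) z unfolding Q_def by auto
      moreover have "r < cmod \<zeta>"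
        using calculation(1) conjunct1[OF z] by argo
      ultimately show "\<zeta> \<in> ball 0 1 \<inter> {\<zeta>. r < cmod \<zeta>}"
        by simp
    qed
    then have "integral Q (BT_integrand p F) < \<epsilon> powr p / K"
      using small unfolding Q_def square_def by blast
    then have "((1 - (cmod z)^2) * sqrt \<bar>jac F z\<bar>) powr p < K * (\<epsilon> powr p / K)"
      using local_bound[of z] K z unfolding Q_def by (meson mult_strict_left_mono order_le_less_trans)
    also have "\<dots> = \<epsilon> powr p"
      using K by simp
    finally show "(1 - (cmod z)^2) * sqrt \<bar>jac F z\<bar> < \<epsilon>"
      using p \<epsilon> z powr_mono2[of p \<epsilon> "(1 - (cmod z)^2) * sqrt \<bar>jac F z\<bar>"] by fastforce
  qed
qed

end

lemma jac_add_cnj: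
  assumes h: "(h has_field_derivative h') (at z)" and g: "(g has_field_derivative g') (at z)"
  shows "jac (\<lambda>z. h z + cnj (g z)) z = (cmod h')^2 - (cmod g')^2"
proof -
  have "(g has_derivative (*) g') (at z)"
    using g by (simp add: has_field_derivative_def)
  then have "((\<lambda>z. cnj (g z)) has_derivative (\<lambda>v. cnj (g' * v))) (at z)"
    using bounded_linear.has_derivative[OF bounded_linear_cnj] by blast
  then have "((\<lambda>z. h z + cnj (g z)) has_derivative (\<lambda>v. h' * v + cnj (g' * v))) (at z)"
    using h by (intro has_derivative_add) (auto simp: has_field_derivative_def)
  then have "frechet_derivative (\<lambda>z. h z + cnj (g z)) (at z) = (\<lambda>v. h' * v + cnj (g' * v))"
    by (rule frechet_derivative_at[symmetric])
  then have "wirt_z (\<lambda>z. h z + cnj (g z)) z = h'" "wirt_zbar (\<lambda>z. h z + cnj (g z)) z = cnj g'"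
    unfolding wirt_z_def wirt_zbar_def by (simp_all add: algebra_simps)
  then show ?thesis
    unfolding jac_def by simp
qed

lemma jacobian_comparable_harmonic:
  assumes hol_h: "h holomorphic_on ball 0 1" and hol_g: "g holomorphic_on ball 0 1"
    and h'_nonzero: "\<forall>z\<in>ball 0 1. deriv h z \<noteq> 0"
    and c: "0 < c" and C: "0 < C"
    and dilatation: "\<forall>z\<in>ball 0 1. deriv g z / deriv h z = W z"
    and W_bounds: "\<And>z. z \<in> ball 0 1 \<Longrightarrow> c * (1 - (cmod z)^2) \<le> 1 - (cmod (W z))^2 \<and> 1 - (cmod (W z))^2 \<le> C * (1 - (cmod z)^2)"
  shows "jacobian_comparable (\<lambda>z. h z + cnj (g z)) (deriv h) c C"
proof -
  have J: "jac (\<lambda>z. h z + cnj (g z)) z = (1 - (cmod (W z))^2) * (cmod (deriv h z))^2"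
    if z: "z \<in> ball 0 1" for z
  proof -
    have "jac (\<lambda>z. h z + cnj (g z)) z = (cmod (deriv h z))^2 - (cmod (deriv g z))^2"
      using hol_h hol_g z by (intro jac_add_cnj holomorphic_derivI[OF _ open_ball]) auto
    also have "deriv g z = W z * deriv h z"
      using dilatation h'_nonzero z by (simp add: field_simps)
    finally show ?thesis
      by (simp add: norm_mult power_mult_distrib algebra_simps)
  qed
  show ?thesis
  proof
    show "deriv h holomorphic_on ball 0 1"
      using hol_h by (rule holomorphic_deriv) simp
  qed (use c C h'_nonzero J W_bounds in \<open>auto intro: mult_right_mono\<close>)
qed

theorem mainTheorem12:
  fixes p :: real and h g :: "complex \<Rightarrow> complex"
  assumes "1 < p"
    and "h holomorphic_on ball 0 1" and "g holomorphic_on ball 0 1"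
    and "\<forall>z\<in>ball 0 1. deriv h z \<noteq> 0"
    and "(\<exists>n::nat. n \<ge> 1 \<and> (\<forall>z\<in>ball 0 1. deriv g z / deriv h z = z ^ n))
       \<or> (\<exists>a. cmod a < 1 \<and> (\<forall>z\<in>ball 0 1. deriv g z / deriv h z = (z + a) / (1 + cnj a * z)))"
    and "(\<lambda>z. h z + cnj (g z)) \<in> BT p"
  shows "(\<lambda>z. h z + cnj (g z)) \<in> BT0"
proof -
  from assms(5) obtain c C W where "0 < c" "0 < C" "\<forall>z\<in>ball 0 1. deriv g z / deriv h z = W z"
    and "\<And>z. z \<in> ball 0 1 \<Longrightarrow> c * (1 - (cmod z)^2) \<le> 1 - (cmod (W z))^2 \<and> 1 - (cmod (W z))^2 \<le> C * (1 - (cmod z)^2)"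
  proof (elim disjE exE conjE)
    fix n :: nat assume "n \<ge> 1" "\<forall>z\<in>ball 0 1. deriv g z / deriv h z = z ^ n"
    then show thesis
      using that[of 1 "real n" "\<lambda>z. z ^ n"] one_minus_norm_power_bounds by simp
  next
    fix a assume a: "cmod a < 1" "\<forall>z\<in>ball 0 1. deriv g z / deriv h z = (z + a) / (1 + cnj a * z)"
    then have "0 < 1 - (cmod a)^2"
      by (simp add: abs_square_less_1)
    then show thesis
      using that[of "(1 - (cmod a)^2) / 4" "(1 - (cmod a)^2) / (1 - cmod a)^2" "\<lambda>z. (z + a) / (1 + cnj a * z)"]
        a one_minus_norm_moebius_bounds by simp
  qed
  then interpret jacobian_comparable "\<lambda>z. h z + cnj (g z)" "deriv h" c C
    by (rule jacobian_comparable_harmonic[OF assms(2-4)])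
  show ?thesis
    using assms(1,6) by (intro BT_imp_BT0[of p]) simp_all
qed

end
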